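(* Let $T$ be a threshold graph with clique number $d$, clique vector $\mathfrak{c}(T)=(c_1,\ldots,c_d)$ and $b$-vector $\mathfrak{b}(T)=(b_1,\ldots,b_d)$. Then \[ \sum_{i=1}^d b_i(x+1)^{i-1}=\sum_{i=1}^d c_i x^{i-1}. \]
   Context: For a graph $G$, $S(G)$ denotes the graph obtained from $G$ by adding a new vertex adjacent to all vertices of $G$, and $D(G)$ the graph obtained by adding a new isolated vertex. For a word $w=w_1\cdots w_n$ over $\{S,D\}$ with $w_n=S$, the threshold graph with word $w$ is $w_1(w_2(\cdots w_n(\emptyset)\cdots))$, $\emptyset$ being the graph with no vertices; every threshold graph arises from exactly one such word. The clique number $d$ of a threshold graph equals the number of letters $S$ in its word. The $b$-vector of a threshold graph $T$ with word $w$ is defined as follows: insert a separator right after every occurrence of $S$ in $w$, thereby cutting $w$ into $d$ consecutive subwords (read left to right), each ending with $S$; $b_i$ is the length of the $i$-th subword. (Example: $w=DDDSSDSDDS$ splits as $DDDS/S/DS/DDS$, giving $\mathfrak{b}=(4,1,2,3)$.) The clique vector $\mathfrak{c}(G)=(c_1,\ldots,c_d)$ of a graph $G$ records the number $c_i$ of cliques with exactly $i$ vertices, $d$ being the clique number. *)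

theory Defs
  imports Main
begin

datatype letter = S | D

text \<open>A word w = w_1 ... w_n (list index 0 = w_1) with w_n = S describes the threshold graph
  w_1(w_2(... w_n(empty)...)).  Vertices are the positions {..< length w}; the vertex at
  position i is created by letter w!i, after all vertices at positions j > i.  Hence for
  i < j, vertices i and j are adjacent iff w!i = S.\<close>

definition valid_word :: "letter list \<Rightarrow> bool" where
  "valid_word w \<longleftrightarrow> w \<noteq> [] \<and> last w = S"

definition tvertices :: "letter list \<Rightarrow> nat set" where
  "tvertices w = {..< length w}"

definition tadj :: "letter list \<Rightarrow> nat \<Rightarrow> nat \<Rightarrow> bool" where
  "tadj w i j \<longleftrightarrow> i \<in> tvertices w \<and> j \<in> tvertices w \<and> i \<noteq> j \<and> w ! (min i j) = S"

definition is_clique :: "letter list \<Rightarrow> nat set \<Rightarrow> bool" where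
  "is_clique w C \<longleftrightarrow> C \<subseteq> tvertices w \<and> (\<forall>i\<in>C. \<forall>j\<in>C. i \<noteq> j \<longrightarrow> tadj w i j)"

definition clique_count :: "letter list \<Rightarrow> nat \<Rightarrow> nat" where
  "clique_count w k = card {C. is_clique w C \<and> card C = k}"

definition clique_number :: "letter list \<Rightarrow> nat" where
  "clique_number w = Max (card ` {C. is_clique w C})"

fun bsplit :: "letter list \<Rightarrow> nat \<Rightarrow> nat list" where
  "bsplit [] acc = []"
| "bsplit (S # xs) acc = Suc acc # bsplit xs 0"
| "bsplit (D # xs) acc = bsplit xs (Suc acc)"

definition bvec :: "letter list \<Rightarrow> nat list" where
  "bvec w = bsplit w 0"

end

theory Submission
  imports Defs
begin

text \<open>Let s_m be the number of letters S strictly before position m. These positions are exactly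
  the neighbours of vertex m among the earlier vertices, and they are pairwise adjacent. Hence a
  clique with k + 1 vertices is its largest vertex m together with a k-subset of these s_m
  vertices, so c_(k+1) = \<Sum>_m (s_m choose k) and, by the binomial theorem,
  \<Sum>_k c_(k+1) x^k = \<Sum>_m (x + 1)^s_m. On the other side, the i-th block of the word consists of
  the positions m with s_m = i - 1, so \<Sum>_i b_i y^(i-1) = \<Sum>_m y^s_m; put y = x + 1. The
  clique number is the total number of letters S, which exceeds every s_m because the word ends
  with S.\<close>

lemma binomial_sum_lessThan:
  fixes x :: "'a::comm_semiring_1"
  assumes "N < d"
  shows "(\<Sum>i<d. of_nat (N choose i) * x ^ i) = (x + 1) ^ N"
proof -
  have "(x + 1) ^ N = (\<Sum>i\<le>N. of_nat (N choose i) * x ^ i)"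
    by (simp add: binomial_ring)
  also have "\<dots> = (\<Sum>i<d. of_nat (N choose i) * x ^ i)"
    by (rule sum.mono_neutral_left) (use assms in \<open>auto simp: binomial_eq_0 not_le[symmetric]\<close>)
  finally show ?thesis by simp
qed

lemma is_clique_iff:
  "is_clique w C \<longleftrightarrow> C \<subseteq> {..<length w} \<and> (\<forall>i\<in>C. \<forall>j\<in>C. i < j \<longrightarrow> w ! i = S)"
proof
  assume "is_clique w C"
  then show "C \<subseteq> {..<length w} \<and> (\<forall>i\<in>C. \<forall>j\<in>C. i < j \<longrightarrow> w ! i = S)"
    unfolding is_clique_def tadj_def tvertices_def by (metis less_imp_neq min.strict_order_iff)
next
  assume "C \<subseteq> {..<length w} \<and> (\<forall>i\<in>C. \<forall>j\<in>C. i < j \<longrightarrow> w ! i = S)"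
  then show "is_clique w C"
    unfolding is_clique_def tadj_def tvertices_def by (auto simp: min_def; meson le_neq_implies_less not_le)
qed

definition lower_neighbours :: "letter list \<Rightarrow> nat \<Rightarrow> nat set" where
  "lower_neighbours w m = {j. j < m \<and> w ! j = S}"

lemma finite_lower_neighbours [simp]: "finite (lower_neighbours w m)"
  by (simp add: lower_neighbours_def)

lemma card_lower_neighbours:
  "m \<le> length w \<Longrightarrow> card (lower_neighbours w m) = length (filter ((=) S) (take m w))"
  unfolding lower_neighbours_def length_filter_conv_card
  by (rule arg_cong[where f = card]) auto

lemma Max_insert_lower_neighbours:
  "A \<subseteq> lower_neighbours w m \<Longrightarrow> Max (insert m A) = m"
  by (rule Max_eqI) (auto simp: lower_neighbours_def intro: finite_subset)

lemma cliques_of_card_Suc: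
  "{C. is_clique w C \<and> card C = Suc k}
     = (\<Union>m<length w. insert m ` {A. A \<subseteq> lower_neighbours w m \<and> card A = k})"
proof (intro equalityI subsetI)
  fix C assume "C \<in> {C. is_clique w C \<and> card C = Suc k}"
  then have clique: "is_clique w C" and card: "card C = Suc k" by auto
  then have "finite C" "C \<noteq> {}" by (auto intro: card_ge_0_finite)
  define m where "m = Max C"
  have "m \<in> C" using \<open>finite C\<close> \<open>C \<noteq> {}\<close> by (simp add: m_def)
  then have "m < length w" using clique by (auto simp: is_clique_iff)
  have "C - {m} \<subseteq> lower_neighbours w m"
  proof
    fix i assume "i \<in> C - {m}"
    then have "i < m" using \<open>finite C\<close> m_def by (simp add: order_less_le)
    then show "i \<in> lower_neighbours w m"
      using clique \<open>i \<in> C - {m}\<close> \<open>m \<in> C\<close> by (auto simp: is_clique_iff lower_neighbours_def)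
  qed
  moreover have "card (C - {m}) = k" using card \<open>m \<in> C\<close> by simp
  moreover have "C = insert m (C - {m})" using \<open>m \<in> C\<close> by auto
  ultimately show "C \<in> (\<Union>m<length w. insert m ` {A. A \<subseteq> lower_neighbours w m \<and> card A = k})"
    using \<open>m < length w\<close> by blast
next
  fix C assume "C \<in> (\<Union>m<length w. insert m ` {A. A \<subseteq> lower_neighbours w m \<and> card A = k})"
  then obtain m A where "m < length w" "A \<subseteq> lower_neighbours w m" "card A = k" "C = insert m A"
    by auto
  have below: "\<forall>i\<in>A. i < m \<and> w ! i = S"
    using \<open>A \<subseteq> lower_neighbours w m\<close> by (auto simp: lower_neighbours_def)
  have "finite A"
    using \<open>A \<subseteq> lower_neighbours w m\<close> finite_lower_neighbours by (rule finite_subset)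
  with below have "card C = Suc k"
    using \<open>C = insert m A\<close> \<open>card A = k\<close> by auto
  moreover have "is_clique w C"
    unfolding is_clique_iff \<open>C = insert m A\<close>
  proof (intro conjI ballI impI)
    show "insert m A \<subseteq> {..<length w}" using below \<open>m < length w\<close> by auto
    fix i j assume "i \<in> insert m A" "j \<in> insert m A" "i < j"
    then have "i \<in> A" using below by auto
    then show "w ! i = S" using below by blast
  qed
  ultimately show "C \<in> {C. is_clique w C \<and> card C = Suc k}" by simp
qed

lemma clique_count_Suc:
  "clique_count w (Suc k) = (\<Sum>m<length w. card (lower_neighbours w m) choose k)"
proof -
  let ?cliques = "\<lambda>m. insert m ` {A. A \<subseteq> lower_neighbours w m \<and> card A = k}"
  have "clique_count w (Suc k) = card (\<Union>m<length w. ?cliques m)"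
    by (simp add: clique_count_def cliques_of_card_Suc)
  also have "\<dots> = (\<Sum>m<length w. card (?cliques m))"
  proof (rule card_UN_disjoint)
    show "\<forall>i\<in>{..<length w}. \<forall>j\<in>{..<length w}. i \<noteq> j \<longrightarrow> ?cliques i \<inter> ?cliques j = {}"
    proof (intro ballI impI equals0I)
      have Max_clique: "Max C = m" if "C \<in> ?cliques m" for C m
        using that by (auto simp: Max_insert_lower_neighbours)
      fix i j C assume "i \<noteq> j" "C \<in> ?cliques i \<inter> ?cliques j"
      then show False
        using Max_clique[of C i] Max_clique[of C j] by simp
    qed
  qed auto
  also have "\<dots> = (\<Sum>m<length w. card (lower_neighbours w m) choose k)"
  proof (rule sum.cong[OF refl])
    fix m
    have "inj_on (insert m) {A. A \<subseteq> lower_neighbours w m \<and> card A = k}"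
      by (rule inj_onI) (auto simp: lower_neighbours_def)
    then show "card (?cliques m) = card (lower_neighbours w m) choose k"
      by (simp add: card_image n_subsets)
  qed
  finally show ?thesis .
qed

lemma card_lower_neighbours_less:
  assumes "valid_word w" "m < length w"
  shows "card (lower_neighbours w m) < card (lower_neighbours w (length w))"
proof (rule psubset_card_mono)
  have "w ! (length w - 1) = S"
    using assms(1) by (metis valid_word_def last_conv_nth)
  then have "length w - 1 \<in> lower_neighbours w (length w) - lower_neighbours w m"
    using assms(2) by (auto simp: lower_neighbours_def)
  moreover have "lower_neighbours w m \<subseteq> lower_neighbours w (length w)"
    using assms(2) by (auto simp: lower_neighbours_def)
  ultimately show "lower_neighbours w m \<subset> lower_neighbours w (length w)" by blast
qed simp

lemma clique_number_eq:
  assumes "valid_word w"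
  shows "clique_number w = card (lower_neighbours w (length w))"
  unfolding clique_number_def
proof (rule Max_eqI)
  have "{C. is_clique w C} \<subseteq> Pow {..<length w}" by (auto simp: is_clique_iff)
  then show "finite (card ` {C. is_clique w C})"
    by (auto intro: finite_subset)
  have "is_clique w (lower_neighbours w (length w))"
    by (auto simp: is_clique_iff lower_neighbours_def)
  then show "card (lower_neighbours w (length w)) \<in> card ` {C. is_clique w C}" by blast
next
  fix y assume "y \<in> card ` {C. is_clique w C}"
  then obtain C where "is_clique w C" "card C = y" by blast
  show "y \<le> card (lower_neighbours w (length w))"
  proof (cases y)
    case (Suc k)
    with \<open>is_clique w C\<close> \<open>card C = y\<close> obtain m A where
      "m < length w" "A \<subseteq> lower_neighbours w m" "card A = k"
      using cliques_of_card_Suc[of w k] by blast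
    then have "k \<le> card (lower_neighbours w m)" by (auto intro: card_mono)
    with card_lower_neighbours_less[OF assms \<open>m < length w\<close>] show ?thesis
      using Suc by linarith
  qed simp
qed

lemma clique_polynomial:
  fixes x :: "'a::comm_semiring_1"
  assumes "valid_word w"
  shows "(\<Sum>i<clique_number w. of_nat (clique_count w (Suc i)) * x ^ i)
       = (\<Sum>m<length w. (x + 1) ^ card (lower_neighbours w m))"
proof -
  have "(\<Sum>i<clique_number w. of_nat (clique_count w (Suc i)) * x ^ i)
      = (\<Sum>m<length w. \<Sum>i<clique_number w. of_nat (card (lower_neighbours w m) choose i) * x ^ i)"
    by (simp add: clique_count_Suc sum_distrib_right sum.swap[of _ "{..<length w}"])
  also have "\<dots> = (\<Sum>m<length w. (x + 1) ^ card (lower_neighbours w m))"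
    using card_lower_neighbours_less[OF assms]
    by (simp add: binomial_sum_lessThan clique_number_eq[OF assms])
  finally show ?thesis .
qed

lemma sum_bsplit:
  fixes y :: "'a::comm_semiring_1"
  assumes "xs = [] \<or> last xs = S"
  shows "(\<Sum>i<length (bsplit xs acc). of_nat (bsplit xs acc ! i) * y ^ i)
       = (\<Sum>m<length xs. y ^ length (filter ((=) S) (take m xs))) + (if xs = [] then 0 else of_nat acc)"
  using assms
proof (induction xs acc rule: bsplit.induct)
  case (1 acc)
  then show ?case by simp
next
  case (2 xs acc)
  then have IH: "(\<Sum>i<length (bsplit xs 0). of_nat (bsplit xs 0 ! i) * y ^ i)
      = (\<Sum>m<length xs. y ^ length (filter ((=) S) (take m xs)))"
    by (cases xs) auto
  have "(\<Sum>i<length (bsplit (S # xs) acc). of_nat (bsplit (S # xs) acc ! i) * y ^ i)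
      = of_nat (Suc acc) + y * (\<Sum>i<length (bsplit xs 0). of_nat (bsplit xs 0 ! i) * y ^ i)"
    by (simp add: sum.lessThan_Suc_shift sum_distrib_left ac_simps del: sum.lessThan_Suc)
  also have "\<dots> = of_nat (Suc acc) + y * (\<Sum>m<length xs. y ^ length (filter ((=) S) (take m xs)))"
    by (simp only: IH)
  finally show ?case
    by (simp add: sum.lessThan_Suc_shift sum_distrib_left ac_simps del: sum.lessThan_Suc)
next
  case (3 xs acc)
  then have "xs \<noteq> []" "last xs = S" by (auto split: if_splits)
  with 3 show ?case
    by (simp add: sum.lessThan_Suc_shift ac_simps del: sum.lessThan_Suc)
qed

lemma length_bvec:
  assumes "valid_word w"
  shows "length (bvec w) = clique_number w"
proof -
  have "length (bsplit xs acc) = length (filter ((=) S) xs)" for xs acc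
    by (induction xs acc rule: bsplit.induct) auto
  then show ?thesis
    by (simp add: bvec_def clique_number_eq[OF assms] card_lower_neighbours)
qed

lemma bvec_polynomial:
  fixes y :: "'a::comm_semiring_1"
  assumes "valid_word w"
  shows "(\<Sum>i<length (bvec w). of_nat (bvec w ! i) * y ^ i)
       = (\<Sum>m<length w. y ^ card (lower_neighbours w m))"
  using assms sum_bsplit[of w 0 y] by (simp add: valid_word_def bvec_def card_lower_neighbours)

theorem proposition2p2:
  fixes w :: "letter list" and x :: int
  assumes "valid_word w"
  shows "(\<Sum>i = 1..clique_number w. int (bvec w ! (i - 1)) * (x + 1) ^ (i - 1))
       = (\<Sum>i = 1..clique_number w. int (clique_count w i) * x ^ (i - 1))"
proof -
  have "(\<Sum>i = 1..clique_number w. int (bvec w ! (i - 1)) * (x + 1) ^ (i - 1))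
      = (\<Sum>i<length (bvec w). int (bvec w ! i) * (x + 1) ^ i)"
    by (simp add: sum.atLeast1_atMost_eq length_bvec[OF assms])
  also have "\<dots> = (\<Sum>i<clique_number w. int (clique_count w (Suc i)) * x ^ i)"
    by (simp add: bvec_polynomial clique_polynomial assms)
  also have "\<dots> = (\<Sum>i = 1..clique_number w. int (clique_count w i) * x ^ (i - 1))"
    by (simp add: sum.atLeast1_atMost_eq)
  finally show ?thesis .
qed

end
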